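(* There is an absolute constant $C>0$ such that for every nonconstant harmonic function $u:\mathbb{C}\to\mathbb{R}$ there exists a sequence of discs $D(z_n,\rho_n)$ ($z_n\in\mathbb{C}$, $\rho_n>0$) with, for all $n$, $u(z_n)=0$ and $M(u,z_n,\rho_n)\le C\,M(u,z_n,\rho_n/2)$, and moreover $\lim_{n\to\infty}M(u,z_n,\rho_n)=+\infty$.
   Context: For a real function $u$, $M(u,z,r)=\sup_{D(z,r)}u$ denotes the supremum of $u$ over the disc $D(z,r)$ of center $z$ and radius $r$. *)

theory Defs
  imports "HOL-Analysis.Analysis"
begin

definition partial_x :: "(complex \<Rightarrow> real) \<Rightarrow> complex \<Rightarrow> real" where
  "partial_x f z = deriv (\<lambda>t::real. f (z + of_real t)) 0"

definition partial_y :: "(complex \<Rightarrow> real) \<Rightarrow> complex \<Rightarrow> real" where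
  "partial_y f z = deriv (\<lambda>t::real. f (z + \<i> * of_real t)) 0"

definition harmonic :: "(complex \<Rightarrow> real) \<Rightarrow> bool" where
  "harmonic u \<longleftrightarrow>
     (\<forall>z. u differentiable (at z)) \<and>
     (\<forall>z. partial_x u differentiable (at z) \<and> partial_y u differentiable (at z)) \<and>
     continuous_on UNIV (partial_x (partial_x u)) \<and>
     continuous_on UNIV (partial_y (partial_y u)) \<and>
     continuous_on UNIV (partial_x (partial_y u)) \<and>
     continuous_on UNIV (partial_y (partial_x u)) \<and>
     (\<forall>z. partial_x (partial_x u) z + partial_y (partial_y u) z = 0)"

definition Msup :: "(complex \<Rightarrow> real) \<Rightarrow> complex \<Rightarrow> real \<Rightarrow> real" where
  "Msup u z r = (SUP w\<in>ball z r. u w)"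

end

theory Submission
  imports Defs "HOL-Complex_Analysis.Complex_Analysis"
begin

(* A harmonic function u on the plane is the real part of an entire function F, so by
   Liouville's theorem a nonconstant u is unbounded above and below and has zeros.
   Suppose the doubling inequality M(u,z,r) <= 64 M(u,z,r/2) fails at a zero z. Choose p
   with u p > M(u,z,r)/2 and let w be the zero of u nearest to p; Harnack's inequality for
   the positive harmonic function u on D(p,|p - w|) gives M(u,w,r/4) >= 2 M(u,z,r/2).
   If doubling failed at all zeros and radii where M is at least M(u,z0,R/2), iterating
   this step with radii R/2^k would give zeros inside D(z0,5R) at which the suprema grow
   like 2^k, although they are bounded by M(u,z0,5R). Hence every R yields a doubling disc
   centred at a zero with supremum at least M(u,z0,R/2), and letting R tend to infinity
   gives the sequence, with C = 64. *)

lemma has_real_derivative_along_line: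
  assumes "(f has_derivative D) (at (w + of_real t0 * v))"
  shows "((\<lambda>t::real. f (w + of_real t * v)) has_real_derivative D v) (at t0)"
proof -
  have lin: "linear D" using assms has_derivative_linear by blast
  have "bounded_linear (\<lambda>t::real. of_real t * v)"
    by (simp add: scaleR_conv_of_real[symmetric] bounded_linear_scaleR_left)
  then have "((\<lambda>t::real. w + of_real t * v) has_derivative (\<lambda>t. of_real t * v)) (at t0)"
    by (auto intro!: derivative_eq_intros bounded_linear_imp_has_derivative)
  from has_derivative_compose[OF this assms]
  have "((\<lambda>t::real. f (w + of_real t * v)) has_derivative (\<lambda>t. D (t *\<^sub>R v))) (at t0)"
    by (simp add: scaleR_conv_of_real)
  moreover have "(\<lambda>t. D (t *\<^sub>R v)) = (\<lambda>t. D v * t)"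
    using lin by (simp add: linear_scale mult.commute)
  ultimately show ?thesis by (simp add: has_field_derivative_def)
qed

lemma partial_x_eq_derivative:
  assumes "(f has_derivative D) (at z)"
  shows "partial_x f z = D 1"
proof -
  have "((\<lambda>t::real. f (z + of_real t * 1)) has_real_derivative D 1) (at 0)"
    by (rule has_real_derivative_along_line) (use assms in simp)
  then show ?thesis unfolding partial_x_def by (simp add: DERIV_imp_deriv)
qed

lemma partial_y_eq_derivative:
  assumes "(f has_derivative D) (at z)"
  shows "partial_y f z = D \<i>"
proof -
  have "((\<lambda>t::real. f (z + of_real t * \<i>)) has_real_derivative D \<i>) (at 0)"
    by (rule has_real_derivative_along_line) (use assms in simp)
  then show ?thesis unfolding partial_y_def by (simp add: DERIV_imp_deriv mult.commute)
qed

lemma has_real_derivative_partial_x: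
  assumes "\<And>z. f differentiable (at z)"
  shows "((\<lambda>t::real. f (w + of_real t)) has_real_derivative partial_x f (w + of_real t0)) (at t0)"
proof -
  obtain D where D: "(f has_derivative D) (at (w + of_real t0 * 1))"
    using assms differentiable_def by blast
  show ?thesis
    using has_real_derivative_along_line[OF D] partial_x_eq_derivative[of f D] D by simp
qed

lemma has_real_derivative_partial_y:
  assumes "\<And>z. f differentiable (at z)"
  shows "((\<lambda>t::real. f (w + \<i> * of_real t)) has_real_derivative partial_y f (w + \<i> * of_real t0)) (at t0)"
proof -
  obtain D where D: "(f has_derivative D) (at (w + of_real t0 * \<i>))"
    using assms differentiable_def by blast
  show ?thesis
    using has_real_derivative_along_line[OF D] partial_y_eq_derivative[of f D] D
    by (simp add: mult.commute)
qed

lemma linear_complex_to_real_eq: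
  assumes "linear (L :: complex \<Rightarrow> real)"
  shows "L h = Re h * L 1 + Im h * L \<i>"
proof -
  have "h = Re h *\<^sub>R 1 + Im h *\<^sub>R \<i>" by (simp add: complex_eq_iff)
  then have "L h = L (Re h *\<^sub>R 1 + Im h *\<^sub>R \<i>)" by simp
  also have "\<dots> = Re h * L 1 + Im h * L \<i>"
    using assms by (simp add: linear_add linear_scale)
  finally show ?thesis .
qed

section \<open>Symmetry of the mixed partial derivatives\<close>

lemma second_difference_mvt:
  fixes \<Phi> A B :: "real \<Rightarrow> real \<Rightarrow> real"
  assumes dA: "\<And>s t. ((\<lambda>s. \<Phi> s t) has_real_derivative A s t) (at s)"
    and dB: "\<And>s t. ((\<lambda>t. A s t) has_real_derivative B s t) (at t)"
    and h: "h > 0"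
  obtains \<xi> \<eta> where "0 < \<xi>" "\<xi> < h" "0 < \<eta>" "\<eta> < h"
    "\<Phi> h h - \<Phi> h 0 - \<Phi> 0 h + \<Phi> 0 0 = h * h * B \<xi> \<eta>"
proof -
  have "\<And>s. ((\<lambda>s. \<Phi> s h - \<Phi> s 0) has_real_derivative A s h - A s 0) (at s)"
    by (intro derivative_intros dA)
  from MVT2[OF h this] obtain \<xi> where \<xi>: "0 < \<xi>" "\<xi> < h"
    "(\<Phi> h h - \<Phi> h 0) - (\<Phi> 0 h - \<Phi> 0 0) = (h - 0) * (A \<xi> h - A \<xi> 0)" by blast
  from MVT2[OF h dB[of \<xi>]] obtain \<eta> where \<eta>: "0 < \<eta>" "\<eta> < h"
    "A \<xi> h - A \<xi> 0 = (h - 0) * B \<xi> \<eta>" by blast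
  show ?thesis by (rule that[OF \<xi>(1,2) \<eta>(1,2)]) (use \<xi>(3) \<eta>(3) in \<open>simp add: algebra_simps\<close>)
qed

lemma dist_add_Re_Im_less:
  assumes "0 < a" "a < h" "0 < b" "b < h"
  shows "dist (z + of_real a + \<i> * of_real b) z < 2 * h"
  using cmod_le[of "of_real a + \<i> * of_real b"] assms by (simp add: dist_norm add.assoc)

text \<open>By the mean value theorem applied twice, the second difference of \<open>u\<close> over a square of
  side \<open>h\<close> is \<open>h\<^sup>2\<close> times either mixed partial at some point of the square, depending on
  the order in which the two differences are taken.\<close>
lemma mixed_partials_meet_nearby:
  assumes du: "\<And>z. u differentiable (at z)"
    and dx: "\<And>z. partial_x u differentiable (at z)"
    and dy: "\<And>z. partial_y u differentiable (at z)"
    and h: "h > 0"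
  obtains p1 p2 where "dist p1 z < 2 * h" "dist p2 z < 2 * h"
    "partial_y (partial_x u) p1 = partial_x (partial_y u) p2"
proof -
  define \<Phi> where "\<Phi> s t = u (z + of_real s + \<i> * of_real t)" for s t :: real
  obtain \<xi> \<eta> where 1: "0 < \<xi>" "\<xi> < h" "0 < \<eta>" "\<eta> < h"
    "\<Phi> h h - \<Phi> h 0 - \<Phi> 0 h + \<Phi> 0 0 = h * h * partial_y (partial_x u) (z + of_real \<xi> + \<i> * of_real \<eta>)"
  proof (rule second_difference_mvt[OF _ _ h])
    fix s t :: real
    show "((\<lambda>s. \<Phi> s t) has_real_derivative partial_x u (z + \<i> * of_real t + of_real s)) (at s)"
      using has_real_derivative_partial_x[OF du, of "z + \<i> * of_real t"]
      unfolding \<Phi>_def by (simp add: ac_simps)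
    show "((\<lambda>t. partial_x u (z + \<i> * of_real t + of_real s)) has_real_derivative
        partial_y (partial_x u) (z + of_real s + \<i> * of_real t)) (at t)"
      using has_real_derivative_partial_y[OF dx, of "z + of_real s"] by (simp add: ac_simps)
  qed
  obtain \<xi>' \<eta>' where 2: "0 < \<xi>'" "\<xi>' < h" "0 < \<eta>'" "\<eta>' < h"
    "\<Phi> h h - \<Phi> 0 h - \<Phi> h 0 + \<Phi> 0 0 = h * h * partial_x (partial_y u) (z + of_real \<eta>' + \<i> * of_real \<xi>')"
  proof (rule second_difference_mvt[OF _ _ h, where \<Phi> = "\<lambda>s t. \<Phi> t s"])
    fix s t :: real
    show "((\<lambda>s. \<Phi> t s) has_real_derivative partial_y u (z + of_real t + \<i> * of_real s)) (at s)"
      using has_real_derivative_partial_y[OF du, of "z + of_real t"] unfolding \<Phi>_def .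
    show "((\<lambda>t. partial_y u (z + of_real t + \<i> * of_real s)) has_real_derivative
        partial_x (partial_y u) (z + of_real t + \<i> * of_real s)) (at t)"
      using has_real_derivative_partial_x[OF dy, of "z + \<i> * of_real s"] by (simp add: ac_simps)
  qed
  have "h * h * partial_y (partial_x u) (z + of_real \<xi> + \<i> * of_real \<eta>) =
        h * h * partial_x (partial_y u) (z + of_real \<eta>' + \<i> * of_real \<xi>')"
    using 1(5) 2(5) by linarith
  then show ?thesis
    using h by (intro that[OF dist_add_Re_Im_less[OF 1(1-4)] dist_add_Re_Im_less[OF 2(3,4,1,2)]]) simp
qed

lemma mixed_partials_commute:
  assumes du: "\<And>z. u differentiable (at z)"
    and dx: "\<And>z. partial_x u differentiable (at z)"
    and dy: "\<And>z. partial_y u differentiable (at z)"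
    and cyx: "continuous_on UNIV (partial_y (partial_x u))"
    and cxy: "continuous_on UNIV (partial_x (partial_y u))"
  shows "partial_y (partial_x u) z = partial_x (partial_y u) z"
proof (rule ccontr)
  define a where "a = partial_y (partial_x u) z"
  define b where "b = partial_x (partial_y u) z"
  define e where "e = dist a b"
  assume "partial_y (partial_x u) z \<noteq> partial_x (partial_y u) z"
  then have e: "e > 0" unfolding e_def a_def b_def by simp
  obtain d1 where d1: "d1 > 0" "\<And>x. dist x z < d1 \<Longrightarrow> dist (partial_y (partial_x u) x) a < e / 2"
    using cyx e unfolding continuous_on_iff a_def by (metis UNIV_I half_gt_zero)
  obtain d2 where d2: "d2 > 0" "\<And>x. dist x z < d2 \<Longrightarrow> dist (partial_x (partial_y u) x) b < e / 2"
    using cxy e unfolding continuous_on_iff b_def by (metis UNIV_I half_gt_zero)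
  have "min d1 d2 / 2 > 0" using d1 d2 by simp
  from mixed_partials_meet_nearby[OF du dx dy this, where z = z]
  obtain p1 p2 where p: "dist p1 z < min d1 d2" "dist p2 z < min d1 d2"
    "partial_y (partial_x u) p1 = partial_x (partial_y u) p2"
    by auto
  have "dist (partial_y (partial_x u) p1) a < e / 2" "dist (partial_y (partial_x u) p1) b < e / 2"
    using d1(2)[of p1] d2(2)[of p2] p by auto
  then have "dist a b < e" by (rule dist_triangle_half_r)
  then show False unfolding e_def by simp
qed

section \<open>Real parts of entire functions\<close>

lemma harmonic_complex_gradient_holomorphic:
  assumes "harmonic u"
  shows "(\<lambda>w. of_real (partial_x u w) - \<i> * of_real (partial_y u w)) holomorphic_on UNIV"
proof -
  have du: "\<And>z. u differentiable (at z)"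
    and dx: "\<And>z. partial_x u differentiable (at z)" and dy: "\<And>z. partial_y u differentiable (at z)"
    and cyx: "continuous_on UNIV (partial_y (partial_x u))"
    and cxy: "continuous_on UNIV (partial_x (partial_y u))"
    and laplace: "\<And>z. partial_x (partial_x u) z + partial_y (partial_y u) z = 0"
    using assms unfolding harmonic_def by blast+
  have "((\<lambda>w. of_real (partial_x u w) - \<i> * of_real (partial_y u w)) has_field_derivative
          (of_real (partial_x (partial_x u) w) - \<i> * of_real (partial_x (partial_y u) w))) (at w)" for w
  proof -
    obtain Dx where Dx: "(partial_x u has_derivative Dx) (at w)" using dx differentiable_def by blast
    obtain Dy where Dy: "(partial_y u has_derivative Dy) (at w)" using dy differentiable_def by blast
    have Dx_eq: "Dx h = Re h * partial_x (partial_x u) w + Im h * partial_x (partial_y u) w" for h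
      using linear_complex_to_real_eq[OF has_derivative_linear[OF Dx], of h]
        partial_x_eq_derivative[OF Dx] partial_y_eq_derivative[OF Dx]
        mixed_partials_commute[OF du dx dy cyx cxy, of w]
      by simp
    have "partial_y (partial_y u) w = - partial_x (partial_x u) w" using laplace[of w] by linarith
    then have Dy_eq: "Dy h = Re h * partial_x (partial_y u) w - Im h * partial_x (partial_x u) w" for h
      using linear_complex_to_real_eq[OF has_derivative_linear[OF Dy], of h]
        partial_x_eq_derivative[OF Dy] partial_y_eq_derivative[OF Dy]
      by simp
    have "((\<lambda>w. of_real (partial_x u w) - \<i> * of_real (partial_y u w)) has_derivative
            (\<lambda>h. of_real (Dx h) - \<i> * of_real (Dy h))) (at w)"
      by (intro derivative_intros Dx Dy)
    moreover have "(\<lambda>h. of_real (Dx h) - \<i> * of_real (Dy h)) =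
       (\<lambda>h. (of_real (partial_x (partial_x u) w) - \<i> * of_real (partial_x (partial_y u) w)) * h)"
      by (rule ext) (simp add: Dx_eq Dy_eq complex_eq_iff algebra_simps)
    ultimately show ?thesis by (simp add: has_field_derivative_def)
  qed
  then show ?thesis by (auto simp: holomorphic_on_def field_differentiable_def)
qed

lemma Re_antiderivative_of_complex_gradient:
  assumes du: "\<And>z. u differentiable (at z)"
    and G: "\<And>w. (G has_field_derivative (of_real (partial_x u w) - \<i> * of_real (partial_y u w))) (at w)"
  obtains c where "\<And>w. u w = Re (G w) - c"
proof -
  have "((\<lambda>w. Re (G w) - u w) has_derivative (\<lambda>h. 0)) (at w within UNIV)" for w
  proof -
    obtain Du where Du: "(u has_derivative Du) (at w)" using du differentiable_def by blast
    have Du_eq: "Du h = Re h * partial_x u w + Im h * partial_y u w" for h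
      using linear_complex_to_real_eq[OF has_derivative_linear[OF Du], of h]
        partial_x_eq_derivative[OF Du] partial_y_eq_derivative[OF Du] by simp
    have "((\<lambda>w. Re (G w) - u w) has_derivative
            (\<lambda>h. Re ((of_real (partial_x u w) - \<i> * of_real (partial_y u w)) * h) - Du h)) (at w)"
      using G[of w] Du unfolding has_field_derivative_def by (intro derivative_intros) auto
    moreover have "(\<lambda>h. Re ((of_real (partial_x u w) - \<i> * of_real (partial_y u w)) * h) - Du h) = (\<lambda>h. 0)"
      by (rule ext) (simp add: Du_eq)
    ultimately show ?thesis by simp
  qed
  from has_derivative_zero_constant[OF convex_UNIV this]
  obtain c where c: "\<And>w. Re (G w) - u w = c" by blast
  show ?thesis
  proof (rule that)
    show "u w = Re (G w) - c" for w using c[of w] by linarith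
  qed
qed

lemma harmonic_imp_Re_entire:
  assumes "harmonic u"
  obtains F where "F holomorphic_on UNIV" "\<And>z. u z = Re (F z)"
proof -
  obtain G where G: "\<And>w. (G has_field_derivative (of_real (partial_x u w) - \<i> * of_real (partial_y u w))) (at w)"
    using holomorphic_convex_primitive'[OF convex_UNIV open_UNIV
        harmonic_complex_gradient_holomorphic[OF assms]] by auto
  have du: "\<And>z. u differentiable (at z)" using assms harmonic_def by blast
  obtain c where c: "\<And>w. u w = Re (G w) - c"
    using Re_antiderivative_of_complex_gradient[OF du G] by blast
  have "(\<lambda>w. G w - of_real c) holomorphic_on UNIV"
    using G by (intro holomorphic_intros) (auto simp: holomorphic_on_def field_differentiable_def)
  then show ?thesis by (rule that) (simp add: c)
qed

text \<open>If \<open>Re F \<le> K\<close>, then \<open>1 / (F - (K + 1))\<close> is a bounded entire function.\<close>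
lemma Liouville_Re_bounded_above:
  assumes hol: "F holomorphic_on UNIV" and K: "\<And>z. Re (F z) \<le> K"
  shows "F constant_on UNIV"
proof -
  define g where "g z = 1 / (F z - of_real (K + 1))" for z
  have norm_ge: "1 \<le> norm (F z - of_real (K + 1))" for z
    using K[of z] abs_Re_le_cmod[of "F z - of_real (K + 1)"] by simp
  then have nz: "F z - of_real (K + 1) \<noteq> 0" for z by (metis norm_zero not_one_le_zero)
  have hol_g: "g holomorphic_on UNIV" unfolding g_def
    by (intro holomorphic_intros hol) (use nz in auto)
  have "norm (g z) \<le> 1" for z
    using norm_ge[of z] unfolding g_def by (simp add: norm_divide divide_le_eq_1)
  then have "bounded (range g)" by (metis bounded_iff rangeE)
  then obtain c where "\<And>z. g z = c"
    using Liouville_theorem[OF hol_g] by (auto simp: constant_on_def)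
  then have "1 / (F z - of_real (K + 1)) = 1 / (F 0 - of_real (K + 1))" for z
    by (simp add: g_def)
  then show ?thesis by (auto simp: constant_on_def)
qed

lemma Re_entire_unbounded_above:
  assumes hol: "F holomorphic_on UNIV" and nonconst: "\<not> (\<exists>c. \<forall>z. Re (F z) = c)"
  obtains w where "K < Re (F w)"
proof -
  have "\<not> F constant_on UNIV"
  proof
    assume "F constant_on UNIV"
    then obtain c where "\<And>z. F z = c" by (auto simp: constant_on_def)
    then show False using nonconst by auto
  qed
  then show ?thesis using Liouville_Re_bounded_above[OF hol] that by (meson not_le)
qed

lemma bdd_above_image_ball:
  fixes u :: "complex \<Rightarrow> real"
  assumes "continuous_on UNIV u"
  shows "bdd_above (u ` ball z r)"
proof -
  have "compact (u ` cball z r)"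
    by (intro compact_continuous_image compact_cball continuous_on_subset[OF assms]) auto
  then have "bdd_above (u ` cball z r)" by (intro bounded_imp_bdd_above compact_imp_bounded)
  then show ?thesis by (rule bdd_above_mono) auto
qed

lemma Msup_upper:
  assumes "continuous_on UNIV u" "w \<in> ball z r"
  shows "u w \<le> Msup u z r"
  unfolding Msup_def by (rule cSUP_upper[OF assms(2) bdd_above_image_ball[OF assms(1)]])

lemma less_Msup_obtains:
  assumes "continuous_on UNIV u" "r > 0" "a < Msup u z r"
  obtains w where "w \<in> ball z r" "a < u w"
  using assms less_cSUP_iff[of "ball z r" u a] bdd_above_image_ball[OF assms(1)]
  unfolding Msup_def by auto

lemma Msup_mono:
  assumes "continuous_on UNIV u" "r > 0" "ball z r \<subseteq> ball z' r'"
  shows "Msup u z r \<le> Msup u z' r'"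
  unfolding Msup_def
  by (rule cSUP_subset_mono) (use assms bdd_above_image_ball[OF assms(1)] in auto)

lemma Msup_mono_radius:
  assumes "continuous_on UNIV u" "r > 0" "r \<le> r'"
  shows "Msup u z r \<le> Msup u z r'"
  by (rule Msup_mono[OF assms(1,2)]) (use assms in auto)

lemma Msup_at_top:
  assumes "continuous_on UNIV u" and unbounded: "\<And>K. \<exists>w. K < u w"
  shows "filterlim (Msup u z) at_top at_top"
  unfolding filterlim_at_top
proof
  fix K
  obtain w where w: "K < u w" using unbounded by blast
  have "K \<le> Msup u z r" if "dist z w < r" for r
    using w Msup_upper[OF assms(1), of w z r] that by simp
  then show "eventually (\<lambda>r. K \<le> Msup u z r) at_top"
    unfolding eventually_at_top_linorder by (intro exI[of _ "dist z w + 1"]) auto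
qed

section \<open>A Harnack inequality\<close>

lemma Schwarz_Lemma_ball:
  assumes hol: "f holomorphic_on ball p d" and f0: "f p = 0"
    and less1: "\<And>x. x \<in> ball p d \<Longrightarrow> norm (f x) < 1" and x: "x \<in> ball p d"
  shows "norm (f x) \<le> dist p x / d"
proof -
  have d: "d > 0" using x by (metis dist_not_less_zero mem_ball order_le_less_trans not_le)
  define \<phi> where "\<phi> \<xi> = p + of_real d * \<xi>" for \<xi>
  have \<phi>_ball: "\<phi> \<xi> \<in> ball p d" if "norm \<xi> < 1" for \<xi>
    using that d by (simp add: \<phi>_def dist_norm norm_mult)
  have "\<phi> holomorphic_on ball 0 1" unfolding \<phi>_def by (intro holomorphic_intros)
  then have "(f \<circ> \<phi>) holomorphic_on ball 0 1"
    by (rule holomorphic_on_compose_gen[OF _ hol]) (use \<phi>_ball in auto)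
  moreover have "(f \<circ> \<phi>) 0 = 0" by (simp add: \<phi>_def f0)
  moreover have "norm ((f \<circ> \<phi>) \<xi>) < 1" if "norm \<xi> < 1" for \<xi>
    using less1[OF \<phi>_ball[OF that]] by simp
  moreover have "norm ((x - p) / of_real d) = dist p x / d"
    using d by (simp add: norm_divide dist_norm norm_minus_commute)
  moreover have "\<phi> ((x - p) / of_real d) = x" using d by (simp add: \<phi>_def)
  ultimately show ?thesis using Schwarz_Lemma(1)[of "f \<circ> \<phi>" "(x - p) / of_real d"] x d by simp
qed

lemma norm_diff_less_norm_add_cnj:
  assumes "Re \<zeta> > 0" "Re a > 0"
  shows "norm (\<zeta> - a) < norm (\<zeta> + cnj a)"
proof -
  have "(norm (\<zeta> - a))^2 < (norm (\<zeta> + cnj a))^2"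
    unfolding cmod_power2 using assms by (simp add: power2_eq_square algebra_simps mult_pos_pos)
  then show ?thesis by (rule power_less_imp_less_base) simp
qed

lemma Re_lower_bound_from_Cayley:
  assumes X: "Re \<zeta> > 0" and A: "Re a > 0" and m: "0 \<le> m" "m \<le> 1"
    and n: "norm (\<zeta> - a) \<le> m * norm (\<zeta> + cnj a)"
  shows "Re a * (1 - m) / 2 \<le> Re \<zeta>"
proof -
  have "(norm (\<zeta> - a))^2 \<le> (m * norm (\<zeta> + cnj a))^2"
    using n by (intro power_mono) auto
  then have "(Re \<zeta> - Re a)^2 + (Im \<zeta> - Im a)^2 \<le> m^2 * (Re \<zeta> + Re a)^2 + m^2 * (Im \<zeta> - Im a)^2"
    unfolding power_mult_distrib cmod_power2 by (simp add: algebra_simps)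
  moreover have "m^2 * (Im \<zeta> - Im a)^2 \<le> (Im \<zeta> - Im a)^2"
    using m by (intro mult_left_le_one_le) (auto simp: power_le_one)
  ultimately have "(Re \<zeta> - Re a)^2 \<le> m^2 * (Re \<zeta> + Re a)^2" by linarith
  then have "\<bar>Re \<zeta> - Re a\<bar>^2 \<le> (m * (Re \<zeta> + Re a))^2" by (simp only: power2_abs power_mult_distrib)
  then have "\<bar>Re \<zeta> - Re a\<bar> \<le> m * (Re \<zeta> + Re a)"
    by (rule power2_le_imp_le) (use m X A in simp)
  then have "Re a - Re \<zeta> \<le> m * Re \<zeta> + m * Re a" by (simp add: abs_le_iff distrib_left)
  then have "Re a * (1 - m) \<le> Re \<zeta> * (1 + m)" by (simp add: algebra_simps)
  also have "\<dots> \<le> Re \<zeta> * 2" using X m by (intro mult_left_mono) auto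
  finally show ?thesis by simp
qed

text \<open>The Cayley transform \<open>(F - F p) / (F + cnj (F p))\<close> maps the disc into the unit disc
  and vanishes at the centre, so the Schwarz lemma applies to it.\<close>
lemma harnack_Re_lower_bound:
  assumes hol: "F holomorphic_on ball p d" and pos: "\<And>x. x \<in> ball p d \<Longrightarrow> Re (F x) > 0"
    and x: "x \<in> ball p d"
  shows "Re (F p) * (1 - dist p x / d) / 2 \<le> Re (F x)"
proof -
  have d: "d > 0" using x by (metis dist_not_less_zero mem_ball order_le_less_trans not_le)
  have Fp: "Re (F p) > 0" using pos d by simp
  have nz: "F y + cnj (F p) \<noteq> 0" if "y \<in> ball p d" for y
    using pos[OF that] Fp by (metis add_pos_pos cnj.sel(1) plus_complex.sel(1) zero_complex.sel(1) less_irrefl)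
  define h where "h y = (F y - F p) / (F y + cnj (F p))" for y
  have "h holomorphic_on ball p d"
    unfolding h_def using hol nz by (intro holomorphic_intros) auto
  moreover have "h p = 0" by (simp add: h_def)
  moreover have "norm (h y) < 1" if "y \<in> ball p d" for y
    using norm_diff_less_norm_add_cnj[OF pos[OF that] Fp] nz[OF that]
    by (simp add: h_def norm_divide divide_less_eq_1)
  ultimately have "norm (h x) \<le> dist p x / d"
    by (rule Schwarz_Lemma_ball[OF _ _ _ x])
  then have "norm (F x - F p) \<le> dist p x / d * norm (F x + cnj (F p))"
    using nz[OF x] by (simp add: h_def norm_divide divide_le_eq)
  moreover have "0 \<le> dist p x / d" "dist p x / d \<le> 1" using x d by simp_all
  ultimately show ?thesis by (intro Re_lower_bound_from_Cayley[OF pos[OF x] Fp])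
qed

lemma harnack_near_boundary:
  assumes hol: "F holomorphic_on ball p d" and pos: "\<And>x. x \<in> ball p d \<Longrightarrow> Re (F x) > 0"
    and w: "dist p w = d" and t: "0 < t" "t \<le> d"
  obtains x where "x \<in> ball w t" "Re (F p) * t / (4 * d) \<le> Re (F x)"
proof -
  have d: "d > 0" using t by simp
  define s where "s = t / (2 * d)"
  have s: "0 < s" "s \<le> 1/2" using t d by (auto simp: s_def field_simps)
  define x where "x = w + of_real s * (p - w)"
  have norm_pw: "norm (p - w) = d" using w by (simp add: dist_norm)
  have "dist x w = s * d" using s norm_pw by (simp add: x_def dist_norm norm_mult)
  then have "x \<in> ball w t" using d t by (simp add: s_def dist_commute)
  have "p - x = of_real (1 - s) * (p - w)" by (simp add: x_def algebra_simps)
  moreover have "norm (of_real (1 - s) :: complex) = 1 - s" using s by (simp only: norm_of_real)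
  ultimately have dist_px: "dist p x = (1 - s) * d" by (simp only: dist_norm norm_mult norm_pw)
  then have "x \<in> ball p d" using s d by simp
  from harnack_Re_lower_bound[OF hol pos this]
  have "Re (F p) * t / (4 * d) \<le> Re (F x)" using dist_px d by (simp add: s_def field_simps)
  with \<open>x \<in> ball w t\<close> show ?thesis by (rule that)
qed

lemma zero_between_connected:
  fixes u :: "'a::topological_space \<Rightarrow> real"
  assumes "continuous_on S u" "connected S" "a \<in> S" "b \<in> S" "u a \<le> 0" "0 \<le> u b"
  shows "\<exists>c\<in>S. u c = 0"
proof -
  have "connected (u ` S)" by (rule connected_continuous_image[OF assms(1,2)])
  from connectedD_interval[OF this imageI[OF assms(3)] imageI[OF assms(4)] assms(5,6)]
  show ?thesis by auto
qed

lemma nearest_zero_positive_ball: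
  fixes u :: "'a::euclidean_space \<Rightarrow> real"
  assumes cont: "continuous_on UNIV u" and z: "u z = 0" and p: "u p > 0"
  obtains w where "u w = 0" "dist p w \<le> dist p z" "\<And>x. x \<in> ball p (dist p w) \<Longrightarrow> u x > 0"
proof -
  have "closed {w. u w = 0}"
    using continuous_closed_preimage_constant[OF cont closed_UNIV, of 0] by simp
  moreover have "{w. u w = 0} \<noteq> {}" using z by blast
  ultimately obtain w where "w \<in> {w. u w = 0}" "\<And>y. y \<in> {w. u w = 0} \<Longrightarrow> dist p w \<le> dist p y"
    by (rule distance_attains_inf[where a = p]) blast
  then have w: "u w = 0" "\<And>y. u y = 0 \<Longrightarrow> dist p w \<le> dist p y" by auto
  have pos: "u x > 0" if x: "x \<in> ball p (dist p w)" for x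
  proof (rule ccontr)
    assume "\<not> u x > 0"
    then have "u x \<le> 0" by simp
    with zero_between_connected[OF continuous_on_subset[OF cont subset_UNIV] connected_segment
        ends_in_segment(1) ends_in_segment(2) _ less_imp_le[OF p]]
    obtain c where c: "c \<in> closed_segment x p" "u c = 0" by blast
    have "dist c p \<le> dist x p" using dist_in_closed_segment[OF c(1)] by (rule conjunct2)
    moreover have "dist x p < dist p w" using x by (simp add: dist_commute)
    ultimately have "dist p c < dist p w" using dist_commute[of p c] by linarith
    with w(2)[OF c(2)] show False by simp
  qed
  show ?thesis using that[OF w(1) w(2)[OF z] pos] .
qed

section \<open>Doubling discs centred at zeros\<close>

locale entire_real_part =
  fixes F :: "complex \<Rightarrow> complex" and u :: "complex \<Rightarrow> real"
  assumes entire: "F holomorphic_on UNIV" and u_eq_Re: "u z = Re (F z)"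
begin

lemma continuous_u: "continuous_on UNIV u"
proof -
  have "u = (\<lambda>z. Re (F z))" using u_eq_Re by auto
  then show ?thesis using holomorphic_on_imp_continuous_on[OF entire] by (simp add: continuous_on_Re)
qed

lemma doubling_failure_step:
  assumes z: "u z = 0" and r: "r > 0" and fail: "64 * Msup u z (r/2) < Msup u z r"
  obtains w where "u w = 0" "dist w z < 2 * r" "2 * Msup u z (r/2) \<le> Msup u w (r/4)"
proof -
  define q where "q = Msup u z (r/2)"
  have q: "0 \<le> q" using Msup_upper[OF continuous_u, of z z "r/2"] z r by (simp add: q_def)
  have "Msup u z r / 2 < Msup u z r" using fail q q_def by linarith
  then obtain p where p: "p \<in> ball z r" "Msup u z r / 2 < u p"
    by (rule less_Msup_obtains[OF continuous_u r])
  have up: "32 * q < u p" "0 < u p" using p(2) fail q unfolding q_def by linarith+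
  obtain w where w: "u w = 0" "dist p w \<le> dist p z" and pos: "\<And>x. x \<in> ball p (dist p w) \<Longrightarrow> u x > 0"
    using nearest_zero_positive_ball[OF continuous_u z up(2)] by blast
  define d where "d = dist p w"
  have "d < r" using p(1) w(2) by (simp add: d_def dist_commute)
  have "0 < d" using w(1) up(2) by (auto simp: d_def)
  have hol: "F holomorphic_on ball p d" using entire by (rule holomorphic_on_subset) simp
  have posF: "\<And>x. x \<in> ball p d \<Longrightarrow> Re (F x) > 0" using pos by (simp add: d_def u_eq_Re[symmetric])
  have t: "0 < min d (r/4)" "min d (r/4) \<le> d" using \<open>0 < d\<close> r by auto
  obtain x where x: "x \<in> ball w (min d (r/4))" "Re (F p) * min d (r/4) / (4 * d) \<le> Re (F x)"
    using harnack_near_boundary[OF hol posF d_def[symmetric] t] by blast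
  have "u p * (d / 4) / (4 * d) \<le> u p * min d (r/4) / (4 * d)"
    using \<open>d < r\<close> \<open>0 < d\<close> up(2) by (intro divide_right_mono mult_left_mono) auto
  then have "u p / 16 \<le> u x" using x(2) \<open>0 < d\<close> by (simp add: u_eq_Re)
  also have "u x \<le> Msup u w (r/4)" using x(1) by (intro Msup_upper[OF continuous_u]) auto
  finally have "2 * q < Msup u w (r/4)" using up(1) by linarith
  moreover have "dist w z < 2 * r"
    using dist_triangle[of w z p] p(1) \<open>d < r\<close> by (simp add: d_def dist_commute)
  ultimately show ?thesis using that w(1) q_def by auto
qed

lemma zero_chain_without_doubling:
  assumes z0: "u z0 = 0" and R: "R > 0"
    and no_doubling: "\<And>w s. s > 0 \<Longrightarrow> u w = 0 \<Longrightarrow> Msup u z0 (R/2) \<le> Msup u w s \<Longrightarrow>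
        64 * Msup u w (s/2) < Msup u w s"
  shows "\<exists>z. u z = 0 \<and> dist z z0 \<le> 4 * R - 4 * (R / 2^k) \<and>
    2^k * Msup u z0 (R/2) \<le> Msup u z (R / 2^k / 2)"
proof (induction k)
  case 0
  show ?case using z0 by (intro exI[of _ z0]) simp
next
  case (Suc k)
  define q where "q = Msup u z0 (R/2)"
  obtain z where z: "u z = 0" "dist z z0 \<le> 4 * R - 4 * (R / 2^k)" "2^k * q \<le> Msup u z (R / 2^k / 2)"
    using Suc.IH unfolding q_def by blast
  define r where "r = R / 2^k"
  have r: "r > 0" using R by (simp add: r_def)
  have "0 \<le> q" using Msup_upper[OF continuous_u, of z0 z0 "R/2"] z0 R by (simp add: q_def)
  then have "q \<le> 2^k * q" using mult_right_mono[of 1 "2^k" q] by simp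
  also have "\<dots> \<le> Msup u z (r/2)" using z(3) by (simp add: r_def)
  also have "\<dots> \<le> Msup u z r" by (rule Msup_mono_radius[OF continuous_u]) (use r in auto)
  finally have "64 * Msup u z (r/2) < Msup u z r" by (rule no_doubling[OF r z(1), folded q_def])
  then obtain w where w: "u w = 0" "dist w z < 2 * r" "2 * Msup u z (r/2) \<le> Msup u w (r/4)"
    by (rule doubling_failure_step[OF z(1) r])
  have "dist w z0 \<le> 4 * R - 4 * (R / 2^Suc k)"
    using dist_triangle[of w z0 z] w(2) z(2) by (simp add: r_def)
  moreover have "2^Suc k * q \<le> Msup u w (R / 2^Suc k / 2)"
    using z(3) w(3) by (simp add: r_def mult.commute)
  ultimately show ?case using w(1) q_def by blast
qed

lemma doubling_disc_exists:
  assumes z0: "u z0 = 0" and R: "R > 0" and q: "0 < Msup u z0 (R/2)"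
  obtains w s where "s > 0" "u w = 0" "Msup u w s \<le> 64 * Msup u w (s/2)"
    "Msup u z0 (R/2) \<le> Msup u w s"
proof (rule ccontr)
  assume "\<not> thesis"
  then have no_doubling: "\<And>w s. s > 0 \<Longrightarrow> u w = 0 \<Longrightarrow> Msup u z0 (R/2) \<le> Msup u w s \<Longrightarrow>
      64 * Msup u w (s/2) < Msup u w s"
    using that by force
  define B where "B = Msup u z0 (5 * R)"
  have bounded: "2^k * Msup u z0 (R/2) \<le> B" for k
  proof -
    obtain z where z: "u z = 0" "dist z z0 \<le> 4 * R - 4 * (R / 2^k)"
        "2^k * Msup u z0 (R/2) \<le> Msup u z (R / 2^k / 2)"
      using zero_chain_without_doubling[OF z0 R no_doubling] by blast
    have rk: "0 < R / 2^k" "R / 2^k \<le> R" using R by (auto simp: field_simps)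
    have "ball z (R / 2^k / 2) \<subseteq> ball z0 (5 * R)"
    proof
      fix y assume "y \<in> ball z (R / 2^k / 2)"
      then have "dist z y < R" using rk by simp
      then show "y \<in> ball z0 (5 * R)"
        using dist_triangle[of z0 y z] z(2) rk by (simp add: dist_commute)
    qed
    then have "Msup u z (R / 2^k / 2) \<le> B"
      unfolding B_def by (intro Msup_mono[OF continuous_u]) (use rk in auto)
    with z(3) show ?thesis by simp
  qed
  obtain k :: nat where "B / Msup u z0 (R/2) < 2^k" using real_arch_pow[of 2] by auto
  with q bounded[of k] show False by (simp add: divide_less_eq)
qed

lemma unbounded_above:
  assumes nonconst: "\<not> (\<exists>c. \<forall>z. u z = c)"
  obtains w where "K < u w"
proof -
  have "\<not> (\<exists>c. \<forall>z. Re (F z) = c)" using nonconst by (simp add: u_eq_Re)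
  then obtain w where "K < Re (F w)" by (rule Re_entire_unbounded_above[OF entire])
  then show ?thesis using that by (simp add: u_eq_Re)
qed

lemma exists_zero:
  assumes nonconst: "\<not> (\<exists>c. \<forall>z. u z = c)"
  obtains z0 where "u z0 = 0"
proof -
  have "(\<lambda>z. - F z) holomorphic_on UNIV" using entire by (intro holomorphic_intros)
  moreover have "\<not> (\<exists>c. \<forall>z. Re (- F z) = c)"
    using nonconst by (simp add: u_eq_Re) (metis minus_equation_iff)
  ultimately obtain w2 where "0 < Re (- F w2)" by (rule Re_entire_unbounded_above)
  then have "u w2 \<le> 0" by (simp add: u_eq_Re)
  moreover obtain w1 where "0 < u w1" using unbounded_above[OF nonconst] .
  ultimately have "\<exists>c\<in>UNIV. u c = 0"
    by (intro zero_between_connected[OF continuous_u connected_UNIV UNIV_I UNIV_I, where b = w1]) auto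
  then show ?thesis using that by blast
qed

lemma doubling_discs_escape:
  assumes nonconst: "\<not> (\<exists>c. \<forall>z. u z = c)"
  shows "\<exists>(zs::nat \<Rightarrow> complex) (\<rho>::nat \<Rightarrow> real).
    (\<forall>n. \<rho> n > 0 \<and> u (zs n) = 0 \<and> Msup u (zs n) (\<rho> n) \<le> 64 * Msup u (zs n) (\<rho> n / 2)) \<and>
    filterlim (\<lambda>n. Msup u (zs n) (\<rho> n)) at_top sequentially"
proof -
  obtain z0 where z0: "u z0 = 0" using exists_zero[OF nonconst] .
  have lim: "filterlim (Msup u z0) at_top at_top"
    using Msup_at_top[OF continuous_u] unbounded_above[OF nonconst] by metis
  then obtain N where N: "\<And>R. N \<le> R \<Longrightarrow> 0 < Msup u z0 R"
    unfolding filterlim_at_top_dense eventually_at_top_linorder by blast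
  define R where "R n = max N 1 + real n" for n
  have "\<exists>w s. s > 0 \<and> u w = 0 \<and> Msup u w s \<le> 64 * Msup u w (s/2) \<and> Msup u z0 (R n) \<le> Msup u w s" for n
  proof -
    have "0 < R n" "N \<le> R n" by (auto simp: R_def)
    then have "0 < 2 * R n" "0 < Msup u z0 (2 * R n / 2)" using N by auto
    then obtain w s where "s > 0" "u w = 0" "Msup u w s \<le> 64 * Msup u w (s/2)"
        "Msup u z0 (2 * R n / 2) \<le> Msup u w s"
      by (rule doubling_disc_exists[OF z0])
    then show ?thesis by auto
  qed
  then obtain zs \<rho> where disc: "\<And>n. \<rho> n > 0 \<and> u (zs n) = 0 \<and>
      Msup u (zs n) (\<rho> n) \<le> 64 * Msup u (zs n) (\<rho> n / 2) \<and> Msup u z0 (R n) \<le> Msup u (zs n) (\<rho> n)"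
    by metis
  have "filterlim R at_top sequentially"
    unfolding R_def by (rule filterlim_tendsto_add_at_top[OF tendsto_const filterlim_real_sequentially])
  with lim have "filterlim (\<lambda>n. Msup u z0 (R n)) at_top sequentially" by (rule filterlim_compose)
  then have "filterlim (\<lambda>n. Msup u (zs n) (\<rho> n)) at_top sequentially"
    by (rule filterlim_at_top_mono) (use disc in auto)
  with disc show ?thesis by blast
qed

end

theorem corollary4:
  shows "\<exists>C>0. \<forall>u::complex \<Rightarrow> real. harmonic u \<and> \<not> (\<exists>c. \<forall>z. u z = c) \<longrightarrow>
     (\<exists>(zs::nat \<Rightarrow> complex) (\<rho>::nat \<Rightarrow> real).
        (\<forall>n. \<rho> n > 0 \<and> u (zs n) = 0 \<and> Msup u (zs n) (\<rho> n) \<le> C * Msup u (zs n) (\<rho> n / 2)) \<and>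
        filterlim (\<lambda>n. Msup u (zs n) (\<rho> n)) at_top sequentially)"
proof (intro exI[of _ 64] conjI allI impI)
  fix u :: "complex \<Rightarrow> real"
  assume u: "harmonic u \<and> \<not> (\<exists>c. \<forall>z. u z = c)"
  then obtain F where "F holomorphic_on UNIV" "\<And>z. u z = Re (F z)"
    using harmonic_imp_Re_entire by blast
  then interpret entire_real_part F u by unfold_locales
  show "\<exists>(zs::nat \<Rightarrow> complex) (\<rho>::nat \<Rightarrow> real).
      (\<forall>n. \<rho> n > 0 \<and> u (zs n) = 0 \<and> Msup u (zs n) (\<rho> n) \<le> 64 * Msup u (zs n) (\<rho> n / 2)) \<and>
      filterlim (\<lambda>n. Msup u (zs n) (\<rho> n)) at_top sequentially"
    using doubling_discs_escape u by blast
qed simp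

end
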